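(* Let $\Xi\subseteq\mathbb{R}^n$ be as in the context, $\Delta_1=[0,1]$, and let $\tilde{A}^k\in\mathbb{R}^{1\times n}$ for $k\in K=\{1,\dots,\kappa\}$. Consider $\mathcal{S}^1=\{(x,y_1,w)\in\Xi\times\Delta_1\times\mathbb{R}^n : y_1x_i=w_i\ \forall i\in N\}$ and $\mathcal{D}=\{(x,y_1,w,z)\in\Xi\times\Delta_1\times\mathbb{R}^n\times\mathbb{R}^\kappa : \tilde{A}^kw=z_k\ \forall k\in K\}$. Then $\mathrm{conv}\big((\mathcal{S}^1\times\mathbb{R}^\kappa)\cap\mathcal{D}\big)=\big(\mathrm{conv}(\mathcal{S}^1)\times\mathbb{R}^\kappa\big)\cap\mathcal{D}$.
   Context: $N=\{1,\dots,n\}$. $\Xi=\{x\in\mathbb{R}^n : Ex\ge f,\ 0\le x\le u\}$ is a network polytope of a directed network whose arcs are indexed by $N$: the rows of $Ex\ge f$ are, for each node $v$, the flow-balance constraint $\sum_{a\text{ out of }v}x_a-\sum_{a\text{ into }v}x_a\ge f_v$ and its negation $-\sum_{a\text{ out of }v}x_a+\sum_{a\text{ into }v}x_a\ge -f_v$, and $u$ is the arc-capacity vector. *)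

theory Defs
  imports "HOL-Analysis.Analysis"
begin

text \<open>Xi = {x. E x \<ge> f, 0 \<le> x \<le> u}, the rows of E x \<ge> f being, for each node v,
the flow balance constraint and its negation.\<close>

definition network_polytope ::
  "('n::finite \<Rightarrow> 'v::finite) \<Rightarrow> ('n \<Rightarrow> 'v) \<Rightarrow> ('v \<Rightarrow> real) \<Rightarrow> real^'n \<Rightarrow> (real^'n) set"
where
  "network_polytope tail head f u =
    {x. (\<forall>v. (\<Sum>a\<in>{a. tail a = v}. x$a) - (\<Sum>a\<in>{a. head a = v}. x$a) \<ge> f v)
      \<and> (\<forall>v. - (\<Sum>a\<in>{a. tail a = v}. x$a) + (\<Sum>a\<in>{a. head a = v}. x$a) \<ge> - f v)
      \<and> (\<forall>a. 0 \<le> x$a \<and> x$a \<le> u$a)}"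

definition S1_set ::
  "(real^'n::finite) set \<Rightarrow> ((real^'n) \<times> real \<times> (real^'n)) set" where
  "S1_set Xi = {(x, y, w). x \<in> Xi \<and> y \<in> {0..1} \<and> (\<forall>i. y * x$i = w$i)}"

definition D_set ::
  "(real^'n::finite) set \<Rightarrow> ('k::finite \<Rightarrow> real^'n) \<Rightarrow>
     ((real^'n) \<times> real \<times> (real^'n) \<times> (real^'k)) set" where
  "D_set Xi A = {(x, y, w, z). x \<in> Xi \<and> y \<in> {0..1} \<and> (\<forall>k. A k \<bullet> w = z$k)}"

definition times_Rk ::
  "('a \<times> 'b \<times> 'c) set \<Rightarrow> ('a \<times> 'b \<times> 'c \<times> (real^'k::finite)) set" where
  "times_Rk T = {(x, y, w, z). (x, y, w) \<in> T}"

end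

theory Submission
  imports Defs
begin

text \<open>On \<open>times_Rk (S1_set Xi)\<close> the constraints of \<open>D_set Xi A\<close> only fix \<open>z\<close> as the linear
function \<open>z = A w\<close>: the constraints \<open>x \<in> Xi\<close> and \<open>y \<in> [0,1]\<close> already hold on \<open>S1_set Xi\<close>,
and, \<open>Xi\<close> being convex, on its convex hull. So both sides are images under the linear map
\<open>(x, y, w) \<mapsto> (x, y, w, A w)\<close>: the left side is the convex hull of the image of \<open>S1_set Xi\<close>,
the right side the image of its convex hull, and convex hulls commute with linear maps.\<close>

lemma convex_linear_lower_bounds:
  fixes L :: "'i \<Rightarrow> 'a::real_vector \<Rightarrow> real"
  assumes "\<And>i. linear (L i)"
  shows "convex {x. \<forall>i. c i \<le> L i x}"
proof -
  have "{x. \<forall>i. c i \<le> L i x} = (\<Inter>i. L i -` {c i..})" by auto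
  then show ?thesis
    by (simp only:) (intro convex_INT convex_linear_vimage assms convex_real_interval(1))
qed

lemma convex_network_polytope:
  fixes tail head :: "'n::finite \<Rightarrow> 'v::finite"
  shows "convex (network_polytope tail head f u)"
proof -
  define net :: "'v \<Rightarrow> real^'n \<Rightarrow> real" where
    "net v x = (\<Sum>a\<in>{a. tail a = v}. x$a) - (\<Sum>a\<in>{a. head a = v}. x$a)" for v x
  have lin_net: "linear (net v)" "linear (\<lambda>x. - net v x)" for v
    by (auto intro!: linearI simp: net_def sum.distrib sum_distrib_left algebra_simps)
  have lin_coord: "linear (\<lambda>x. x$a)" "linear (\<lambda>x. - x$a)" for a :: 'n
    by (auto intro!: linearI)
  have polytope_eq: "network_polytope tail head f u =
      {x. \<forall>v. f v \<le> net v x} \<inter> {x. \<forall>v. - f v \<le> - net v x}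
      \<inter> {x. \<forall>a. 0 \<le> x$a} \<inter> {x. \<forall>a. - u$a \<le> - x$a}"
    by (auto simp: network_polytope_def net_def)
  show ?thesis
    unfolding polytope_eq by (intro convex_Int convex_linear_lower_bounds lin_net lin_coord)
qed

definition append_Aw ::
  "('k::finite \<Rightarrow> real^'n::finite) \<Rightarrow> (real^'n) \<times> real \<times> (real^'n)
     \<Rightarrow> (real^'n) \<times> real \<times> (real^'n) \<times> (real^'k)" where
  "append_Aw A = (\<lambda>(x, y, w). (x, y, w, \<chi> k. A k \<bullet> w))"

lemma linear_append_Aw: "linear (append_Aw A)"
  by (rule linearI) (auto simp: append_Aw_def vec_eq_iff inner_add_right)

lemma times_Rk_Int_D_set_eq_image:
  assumes "T \<subseteq> Xi \<times> {0..1} \<times> UNIV"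
  shows "times_Rk T \<inter> D_set Xi A = append_Aw A ` T"
proof
  show "append_Aw A ` T \<subseteq> times_Rk T \<inter> D_set Xi A"
    using assms by (auto simp: append_Aw_def times_Rk_def D_set_def)
  show "times_Rk T \<inter> D_set Xi A \<subseteq> append_Aw A ` T"
  proof
    fix p assume "p \<in> times_Rk T \<inter> D_set Xi A"
    then obtain x y w z where p: "p = (x, y, w, z)" "(x, y, w) \<in> T" "\<forall>k. A k \<bullet> w = z$k"
      by (auto simp: times_Rk_def D_set_def)
    then have "p = append_Aw A (x, y, w)"
      by (simp add: append_Aw_def vec_eq_iff)
    with p show "p \<in> append_Aw A ` T" by blast
  qed
qed

lemma convex_hull_S1_set_subset:
  assumes "convex Xi"
  shows "convex hull (S1_set Xi) \<subseteq> Xi \<times> {0..1} \<times> UNIV"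
proof (rule hull_minimal)
  show "S1_set Xi \<subseteq> Xi \<times> {0..1} \<times> UNIV" by (auto simp: S1_set_def)
  show "convex (Xi \<times> {0..1::real} \<times> (UNIV :: (real^'n) set))"
    by (intro convex_Times assms convex_real_interval convex_UNIV)
qed

lemma convex_hull_times_Rk_S1_set_Int_D_set:
  assumes "convex Xi"
  shows "convex hull (times_Rk (S1_set Xi) \<inter> D_set Xi A)
           = times_Rk (convex hull (S1_set Xi)) \<inter> D_set Xi A"
proof -
  have hull_bound: "convex hull (S1_set Xi) \<subseteq> Xi \<times> {0..1} \<times> UNIV"
    using assms by (rule convex_hull_S1_set_subset)
  then have "S1_set Xi \<subseteq> Xi \<times> {0..1} \<times> UNIV"
    using hull_subset[of "S1_set Xi" convex] by (rule order_trans[rotated])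
  then have "convex hull (times_Rk (S1_set Xi) \<inter> D_set Xi A)
      = convex hull (append_Aw A ` S1_set Xi)"
    by (rule arg_cong[OF times_Rk_Int_D_set_eq_image])
  also have "\<dots> = append_Aw A ` (convex hull S1_set Xi)"
    by (rule convex_hull_linear_image[OF linear_append_Aw, symmetric])
  also have "\<dots> = times_Rk (convex hull (S1_set Xi)) \<inter> D_set Xi A"
    by (rule times_Rk_Int_D_set_eq_image[OF hull_bound, symmetric])
  finally show ?thesis .
qed

theorem proposition3:
  fixes tail head :: "'n::finite \<Rightarrow> 'v::finite"
    and f :: "'v \<Rightarrow> real" and u :: "real^'n"
    and A :: "'k::finite \<Rightarrow> real^'n"
  defines "Xi \<equiv> network_polytope tail head f u"
  shows "convex hull (times_Rk (S1_set Xi) \<inter> D_set Xi A)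
           = times_Rk (convex hull (S1_set Xi)) \<inter> D_set Xi A"
  unfolding Xi_def
  by (rule convex_hull_times_Rk_S1_set_Int_D_set[OF convex_network_polytope])

end
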